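(* Let $(\mathcal G,\lambda)$ be a small morphism-colored groupoid satisfying the inverse-compatibility condition, and let $\bar I_0,\bar I_1,s_0,s_1,\lambda_0,\lambda_1$ be as in the context. Then the following data give a well-defined small groupoid $\mathcal U(\mathcal G,\lambda)$: its set of objects is $\bar I_0$ and its set of morphisms is $\bar I_1$; for $f\in\mathrm{Mor}(\mathcal G)$ the source of $(s_1\circ\lambda_1)(f)$ is $(s_0\circ\lambda_0)(\mathrm{source}(f))$ and its target is $(s_0\circ\lambda_0)(\mathrm{target}(f))$; and for every composable pair $(f,g)$ of morphisms of $\mathcal G$, $(s_1\circ\lambda_1)(f)\circ(s_1\circ\lambda_1)(g)=(s_1\circ\lambda_1)(f\circ g)$. (In particular, source and target depend only on the class $(s_1\circ\lambda_1)(f)$, every pair of elements $a,b\in\bar I_1$ with source of $a$ equal to target of $b$ is of the form $a=(s_1\circ\lambda_1)(f)$, $b=(s_1\circ\lambda_1)(g)$ with $(f,g)$ composable in $\mathcal G$, and the composite $a\circ b$ does not depend on that choice.)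
   Context: A morphism-colored category is a pair $(\mathcal C,\lambda)$ where $\mathcal C$ is a category and $\lambda$ assigns to each morphism $f$ of $\mathcal C$ a "color" $\lambda(f)$, such that: whenever $g,f_1,f_2\in\mathrm{Mor}(\mathcal C)$ with $(f_1,f_2)$ composable satisfy $\lambda(g)=\lambda(f_1\circ f_2)$, there exist composable $g_1,g_2\in\mathrm{Mor}(\mathcal C)$ with $g=g_1\circ g_2$, $\lambda(g_1)=\lambda(f_1)$, $\lambda(g_2)=\lambda(f_2)$. It is a morphism-colored groupoid if $\mathcal C$ is a groupoid, and small if $\mathcal C$ is small and $\lambda$ is a map from $\mathrm{Mor}(\mathcal C)$ to a set. Standing setup: $(\mathcal G,\lambda)$ is a small morphism-colored groupoid with $\lambda:\mathrm{Mor}(\mathcal G)\to I$, satisfying the inverse-compatibility condition: for all $f,g\in\mathrm{Mor}(\mathcal G)$, $\lambda(f)=\lambda(g)$ implies $\lambda(f^{-1})=\lambda(g^{-1})$. Let $I_1$ be the image of $\lambda$ and $\lambda_1:\mathrm{Mor}(\mathcal G)\to I_1$, $\lambda_1(f)=\lambda(f)$. Let $I_0=\{\lambda(\mathrm{id}_x): x\in\mathrm{Obj}(\mathcal G)\}$ and $\lambda_0:\mathrm{Obj}(\mathcal G)\to I_0$, $\lambda_0(x)=\lambda(\mathrm{id}_x)$. The relation $\overset{1}{\sim}$ on $I_1$: for every $l\ge1$ and every pair of composable sequences $(f_1,\dots,f_l)$, $(g_1,\dots,g_l)$ of morphisms of $\mathcal G$ with $\lambda(f_i)=\lambda(g_i)$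 for all $i$, declare $\lambda(f_1\circ\cdots\circ f_l)\overset{1}{\sim}\lambda(g_1\circ\cdots\circ g_l)$ (and no other pairs are related). This is an equivalence relation; $\bar I_1$ is the set of its classes and $s_1:I_1\to\bar I_1$ the quotient map. The relation $\overset{0}{\sim}$ on $I_0$: declare $\lambda_0(\mathrm{source}(f))\overset{0}{\sim}\lambda_0(\mathrm{source}(g))$ for all $f,g\in\mathrm{Mor}(\mathcal G)$ with $(s_1\circ\lambda_1)(f)=(s_1\circ\lambda_1)(g)$. This is an equivalence relation; $\bar I_0$ is the set of its classes and $s_0:I_0\to\bar I_0$ the quotient map. *)

theory Defs
  imports Main
begin

definition is_category ::
  "'o set \<Rightarrow> 'm set \<Rightarrow> ('m \<Rightarrow> 'o) \<Rightarrow> ('m \<Rightarrow> 'o) \<Rightarrow> ('m \<Rightarrow> 'm \<Rightarrow> 'm) \<Rightarrow> ('o \<Rightarrow> 'm) \<Rightarrow> bool"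
where
  "is_category Obj Mor src tgt cmp idt \<longleftrightarrow>
     (\<forall>f\<in>Mor. src f \<in> Obj \<and> tgt f \<in> Obj) \<and>
     (\<forall>x\<in>Obj. idt x \<in> Mor \<and> src (idt x) = x \<and> tgt (idt x) = x) \<and>
     (\<forall>f\<in>Mor. \<forall>g\<in>Mor. src f = tgt g \<longrightarrow>
         cmp f g \<in> Mor \<and> src (cmp f g) = src g \<and> tgt (cmp f g) = tgt f) \<and>
     (\<forall>f\<in>Mor. \<forall>g\<in>Mor. \<forall>h\<in>Mor. src f = tgt g \<longrightarrow> src g = tgt h \<longrightarrow>
         cmp (cmp f g) h = cmp f (cmp g h)) \<and>
     (\<forall>f\<in>Mor. cmp (idt (tgt f)) f = f \<and> cmp f (idt (src f)) = f)"

definition is_groupoid ::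
  "'o set \<Rightarrow> 'm set \<Rightarrow> ('m \<Rightarrow> 'o) \<Rightarrow> ('m \<Rightarrow> 'o) \<Rightarrow> ('m \<Rightarrow> 'm \<Rightarrow> 'm) \<Rightarrow> ('o \<Rightarrow> 'm) \<Rightarrow> bool"
where
  "is_groupoid Obj Mor src tgt cmp idt \<longleftrightarrow>
     is_category Obj Mor src tgt cmp idt \<and>
     (\<forall>f\<in>Mor. \<exists>g\<in>Mor. src g = tgt f \<and> tgt g = src f \<and>
         cmp g f = idt (src f) \<and> cmp f g = idt (tgt f))"

definition ginv ::
  "'m set \<Rightarrow> ('m \<Rightarrow> 'o) \<Rightarrow> ('m \<Rightarrow> 'o) \<Rightarrow> ('m \<Rightarrow> 'm \<Rightarrow> 'm) \<Rightarrow> ('o \<Rightarrow> 'm) \<Rightarrow> 'm \<Rightarrow> 'm"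
where
  "ginv Mor src tgt cmp idt f = (SOME g. g \<in> Mor \<and> src g = tgt f \<and> tgt g = src f \<and>
         cmp g f = idt (src f) \<and> cmp f g = idt (tgt f))"

definition morphism_colored ::
  "'m set \<Rightarrow> ('m \<Rightarrow> 'o) \<Rightarrow> ('m \<Rightarrow> 'o) \<Rightarrow> ('m \<Rightarrow> 'm \<Rightarrow> 'm) \<Rightarrow> ('m \<Rightarrow> 'i) \<Rightarrow> bool"
where
  "morphism_colored Mor src tgt cmp lam \<longleftrightarrow>
     (\<forall>g\<in>Mor. \<forall>f1\<in>Mor. \<forall>f2\<in>Mor. src f1 = tgt f2 \<longrightarrow> lam g = lam (cmp f1 f2) \<longrightarrow>
        (\<exists>g1\<in>Mor. \<exists>g2\<in>Mor. src g1 = tgt g2 \<and> g = cmp g1 g2 \<and>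
            lam g1 = lam f1 \<and> lam g2 = lam f2))"

definition inverse_compatible ::
  "'m set \<Rightarrow> ('m \<Rightarrow> 'o) \<Rightarrow> ('m \<Rightarrow> 'o) \<Rightarrow> ('m \<Rightarrow> 'm \<Rightarrow> 'm) \<Rightarrow> ('o \<Rightarrow> 'm) \<Rightarrow> ('m \<Rightarrow> 'i) \<Rightarrow> bool"
where
  "inverse_compatible Mor src tgt cmp idt lam \<longleftrightarrow>
     (\<forall>f\<in>Mor. \<forall>g\<in>Mor. lam f = lam g \<longrightarrow>
        lam (ginv Mor src tgt cmp idt f) = lam (ginv Mor src tgt cmp idt g))"

definition composable_seq :: "'m set \<Rightarrow> ('m \<Rightarrow> 'o) \<Rightarrow> ('m \<Rightarrow> 'o) \<Rightarrow> 'm list \<Rightarrow> bool" where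
  "composable_seq Mor src tgt fs \<longleftrightarrow> fs \<noteq> [] \<and> set fs \<subseteq> Mor \<and>
     (\<forall>i. Suc i < length fs \<longrightarrow> src (fs ! i) = tgt (fs ! Suc i))"

fun comp_seq :: "('m \<Rightarrow> 'm \<Rightarrow> 'm) \<Rightarrow> 'm list \<Rightarrow> 'm" where
  "comp_seq cmp [] = undefined"
| "comp_seq cmp [f] = f"
| "comp_seq cmp (f # g # fs) = cmp f (comp_seq cmp (g # fs))"

text \<open>The relation ~1 on I_1 (exactly the generating pairs, as in the paper).\<close>
definition rel1 ::
  "'m set \<Rightarrow> ('m \<Rightarrow> 'o) \<Rightarrow> ('m \<Rightarrow> 'o) \<Rightarrow> ('m \<Rightarrow> 'm \<Rightarrow> 'm) \<Rightarrow> ('m \<Rightarrow> 'i) \<Rightarrow> ('i \<times> 'i) set"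
where
  "rel1 Mor src tgt cmp lam =
     {(lam (comp_seq cmp fs), lam (comp_seq cmp gs)) | fs gs.
        composable_seq Mor src tgt fs \<and> composable_seq Mor src tgt gs \<and>
        length fs = length gs \<and> (\<forall>i < length fs. lam (fs ! i) = lam (gs ! i))}"

definition I1 :: "'m set \<Rightarrow> ('m \<Rightarrow> 'i) \<Rightarrow> 'i set" where
  "I1 Mor lam = lam ` Mor"

definition Ibar1 ::
  "'m set \<Rightarrow> ('m \<Rightarrow> 'o) \<Rightarrow> ('m \<Rightarrow> 'o) \<Rightarrow> ('m \<Rightarrow> 'm \<Rightarrow> 'm) \<Rightarrow> ('m \<Rightarrow> 'i) \<Rightarrow> 'i set set"
where
  "Ibar1 Mor src tgt cmp lam = I1 Mor lam // rel1 Mor src tgt cmp lam"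

definition s1 ::
  "'m set \<Rightarrow> ('m \<Rightarrow> 'o) \<Rightarrow> ('m \<Rightarrow> 'o) \<Rightarrow> ('m \<Rightarrow> 'm \<Rightarrow> 'm) \<Rightarrow> ('m \<Rightarrow> 'i) \<Rightarrow> 'i \<Rightarrow> 'i set"
where
  "s1 Mor src tgt cmp lam a = rel1 Mor src tgt cmp lam `` {a}"

definition lam0 :: "('o \<Rightarrow> 'm) \<Rightarrow> ('m \<Rightarrow> 'i) \<Rightarrow> 'o \<Rightarrow> 'i" where
  "lam0 idt lam x = lam (idt x)"

definition I0 :: "'o set \<Rightarrow> ('o \<Rightarrow> 'm) \<Rightarrow> ('m \<Rightarrow> 'i) \<Rightarrow> 'i set" where
  "I0 Obj idt lam = lam0 idt lam ` Obj"

text \<open>The relation ~0 on I_0 (exactly the generating pairs, as in the paper).\<close>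
definition rel0 ::
  "'m set \<Rightarrow> ('m \<Rightarrow> 'o) \<Rightarrow> ('m \<Rightarrow> 'o) \<Rightarrow> ('m \<Rightarrow> 'm \<Rightarrow> 'm) \<Rightarrow> ('o \<Rightarrow> 'm) \<Rightarrow> ('m \<Rightarrow> 'i) \<Rightarrow> ('i \<times> 'i) set"
where
  "rel0 Mor src tgt cmp idt lam =
     {(lam0 idt lam (src f), lam0 idt lam (src g)) | f g.
        f \<in> Mor \<and> g \<in> Mor \<and>
        s1 Mor src tgt cmp lam (lam f) = s1 Mor src tgt cmp lam (lam g)}"

definition Ibar0 ::
  "'o set \<Rightarrow> 'm set \<Rightarrow> ('m \<Rightarrow> 'o) \<Rightarrow> ('m \<Rightarrow> 'o) \<Rightarrow> ('m \<Rightarrow> 'm \<Rightarrow> 'm) \<Rightarrow> ('o \<Rightarrow> 'm) \<Rightarrow> ('m \<Rightarrow> 'i) \<Rightarrow> 'i set set"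
where
  "Ibar0 Obj Mor src tgt cmp idt lam = I0 Obj idt lam // rel0 Mor src tgt cmp idt lam"

definition s0 ::
  "'m set \<Rightarrow> ('m \<Rightarrow> 'o) \<Rightarrow> ('m \<Rightarrow> 'o) \<Rightarrow> ('m \<Rightarrow> 'm \<Rightarrow> 'm) \<Rightarrow> ('o \<Rightarrow> 'm) \<Rightarrow> ('m \<Rightarrow> 'i) \<Rightarrow> 'i \<Rightarrow> 'i set"
where
  "s0 Mor src tgt cmp idt lam a = rel0 Mor src tgt cmp idt lam `` {a}"

end

theory Submission
  imports Defs
begin

text \<open>The coloring axiom lets a composable sequence be lifted, color by color, along any morphism
  having the color of its composite. Together with inverses this makes \<open>\<sim>\<^sub>1\<close>, although
  defined only by its generating pairs, transitive: two witnessing pairs are glued by inserting a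
  morphism followed by its inverse. The pairs \<open>(f\<^sup>-\<^sup>1, f)\<close> and \<open>(g\<^sup>-\<^sup>1, g)\<close> relate the
  identities at the sources of like-colored morphisms, so \<open>\<sim>\<^sub>0\<close> is \<open>\<sim>\<^sub>1\<close> restricted to
  identity colors and source and target of a class are well defined; concatenating lifted
  sequences makes composition well defined. Finally, transporting colors along like-colored
  morphisms turns a class whose source is the target class of \<open>g\<close> into the class of a morphism
  composable with \<open>g\<close>.\<close>

lemma map_eq_map_iff_nth:
  "map h xs = map h ys \<longleftrightarrow> length xs = length ys \<and> (\<forall>i<length xs. h (xs ! i) = h (ys ! i))"
  by (auto simp: list_eq_iff_nth_eq)

lemma map_eq_map_hd: "\<lbrakk>map h xs = map h ys; xs \<noteq> []\<rbrakk> \<Longrightarrow> h (hd xs) = h (hd ys)"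
  by (cases xs; cases ys) auto

lemma map_eq_map_last: "\<lbrakk>map h xs = map h ys; xs \<noteq> []\<rbrakk> \<Longrightarrow> h (last xs) = h (last ys)"
  by (metis last_map list.map_disc_iff)

locale small_category =
  fixes Obj :: "'o set" and Mor :: "'m set"
    and src tgt :: "'m \<Rightarrow> 'o" and cmp :: "'m \<Rightarrow> 'm \<Rightarrow> 'm" and idt :: "'o \<Rightarrow> 'm"
  assumes category: "is_category Obj Mor src tgt cmp idt"
begin

lemma src_in: "f \<in> Mor \<Longrightarrow> src f \<in> Obj"
  and tgt_in: "f \<in> Mor \<Longrightarrow> tgt f \<in> Obj"
  and idt_in: "x \<in> Obj \<Longrightarrow> idt x \<in> Mor"
  and src_idt: "x \<in> Obj \<Longrightarrow> src (idt x) = x"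
  and tgt_idt: "x \<in> Obj \<Longrightarrow> tgt (idt x) = x"
  and cmp_in: "f \<in> Mor \<Longrightarrow> g \<in> Mor \<Longrightarrow> src f = tgt g \<Longrightarrow> cmp f g \<in> Mor"
  and src_cmp: "f \<in> Mor \<Longrightarrow> g \<in> Mor \<Longrightarrow> src f = tgt g \<Longrightarrow> src (cmp f g) = src g"
  and tgt_cmp: "f \<in> Mor \<Longrightarrow> g \<in> Mor \<Longrightarrow> src f = tgt g \<Longrightarrow> tgt (cmp f g) = tgt f"
  and cmp_assoc: "\<lbrakk>f \<in> Mor; g \<in> Mor; h \<in> Mor; src f = tgt g; src g = tgt h\<rbrakk> \<Longrightarrow>
      cmp (cmp f g) h = cmp f (cmp g h)"
  and cmp_idt_left: "f \<in> Mor \<Longrightarrow> cmp (idt (tgt f)) f = f"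
  and cmp_idt_right: "f \<in> Mor \<Longrightarrow> cmp f (idt (src f)) = f"
  using category unfolding is_category_def by auto

fun composable :: "'m list \<Rightarrow> bool" where
  "composable [] = False"
| "composable [f] = (f \<in> Mor)"
| "composable (f # g # fs) = (f \<in> Mor \<and> src f = tgt g \<and> composable (g # fs))"

lemma composable_seq_iff: "composable_seq Mor src tgt fs \<longleftrightarrow> composable fs"
  by (induction fs rule: composable.induct)
    (auto simp: composable_seq_def less_Suc_eq_0_disj)

lemma composable_not_Nil: "composable fs \<Longrightarrow> fs \<noteq> []"
  by auto

lemma composable_in: "composable fs \<Longrightarrow> set fs \<subseteq> Mor"
  by (induction fs rule: composable.induct) auto

lemma composable_hd_in: "composable fs \<Longrightarrow> hd fs \<in> Mor"
  using composable_in composable_not_Nil by (metis hd_in_set subsetD)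

lemma composable_last_in: "composable fs \<Longrightarrow> last fs \<in> Mor"
  using composable_in composable_not_Nil by (metis last_in_set subsetD)

lemma comp_seq_in: "composable fs \<Longrightarrow> comp_seq cmp fs \<in> Mor"
  and src_comp_seq: "composable fs \<Longrightarrow> src (comp_seq cmp fs) = src (last fs)"
  and tgt_comp_seq: "composable fs \<Longrightarrow> tgt (comp_seq cmp fs) = tgt (hd fs)"
  by (induction fs rule: composable.induct) (auto simp: cmp_in src_cmp tgt_cmp)

lemma composable_append:
  assumes "composable fs" "composable gs" "src (last fs) = tgt (hd gs)"
  shows "composable (fs @ gs) \<and> comp_seq cmp (fs @ gs) = cmp (comp_seq cmp fs) (comp_seq cmp gs)"
  using assms
proof (induction fs rule: composable.induct)
  case (2 f)
  then show ?case by (cases gs) auto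
next
  case (3 f g fs)
  then show ?case
    using cmp_assoc[of f "comp_seq cmp (g # fs)" "comp_seq cmp gs"]
    by (auto simp: comp_seq_in tgt_comp_seq src_comp_seq)
qed auto

end

locale small_groupoid = small_category +
  assumes inverses: "\<forall>f\<in>Mor. \<exists>g\<in>Mor. src g = tgt f \<and> tgt g = src f \<and>
      cmp g f = idt (src f) \<and> cmp f g = idt (tgt f)"
begin

abbreviation ginverse where
  "ginverse \<equiv> ginv Mor src tgt cmp idt"

lemma ginverse_in: "f \<in> Mor \<Longrightarrow> ginverse f \<in> Mor"
  and src_ginverse: "f \<in> Mor \<Longrightarrow> src (ginverse f) = tgt f"
  and tgt_ginverse: "f \<in> Mor \<Longrightarrow> tgt (ginverse f) = src f"
  and ginverse_cmp: "f \<in> Mor \<Longrightarrow> cmp (ginverse f) f = idt (src f)"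
  and cmp_ginverse: "f \<in> Mor \<Longrightarrow> cmp f (ginverse f) = idt (tgt f)"
  using someI_ex[OF inverses[rule_format, unfolded Bex_def]] unfolding ginv_def by blast+

lemma ginverse_ginverse:
  assumes f: "f \<in> Mor"
  shows "ginverse (ginverse f) = f"
proof -
  let ?g = "ginverse f" and ?h = "ginverse (ginverse f)"
  have g: "?g \<in> Mor" and h: "?h \<in> Mor" using f by (simp_all add: ginverse_in)
  have "?h = cmp ?h (idt (src f))"
    using cmp_idt_right[OF h] f g by (simp add: src_ginverse tgt_ginverse)
  also have "\<dots> = cmp ?h (cmp ?g f)"
    using f by (simp add: ginverse_cmp)
  also have "\<dots> = cmp (cmp ?h ?g) f"
    using f g h by (simp add: cmp_assoc src_ginverse tgt_ginverse)
  also have "\<dots> = f"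
    using f g by (simp add: ginverse_cmp src_ginverse cmp_idt_left)
  finally show ?thesis .
qed

lemma comp_seq_cancel_left:
  assumes ps: "composable ps" and fs: "composable fs"
    and tgt_eq: "tgt (comp_seq cmp ps) = tgt (hd fs)"
  shows "composable (ps @ ginverse (comp_seq cmp ps) # fs)
    \<and> comp_seq cmp (ps @ ginverse (comp_seq cmp ps) # fs) = comp_seq cmp fs"
proof -
  let ?P = "comp_seq cmp ps" and ?F = "comp_seq cmp fs"
  have P: "?P \<in> Mor" and F: "?F \<in> Mor" using ps fs by (simp_all add: comp_seq_in)
  have inv_fs: "composable (ginverse ?P # fs)"
    using fs tgt_eq P by (cases fs) (auto simp: ginverse_in src_ginverse)
  have comp_inv_fs: "comp_seq cmp (ginverse ?P # fs) = cmp (ginverse ?P) ?F"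
    using fs by (cases fs) auto
  have cancel: "cmp ?P (cmp (ginverse ?P) ?F) = ?F"
    using P F tgt_eq fs cmp_idt_left[OF F]
    by (simp add: cmp_assoc[symmetric] ginverse_in src_ginverse tgt_ginverse cmp_ginverse
        tgt_comp_seq)
  have "src (last ps) = tgt (hd (ginverse ?P # fs))"
    using ps P by (simp add: src_comp_seq tgt_ginverse)
  from composable_append[OF ps inv_fs this] show ?thesis
    using comp_inv_fs cancel by simp
qed

lemma comp_seq_cancel_right:
  assumes ks: "composable ks" and hs: "composable hs"
    and src_eq: "src (comp_seq cmp hs) = src (last ks)"
  shows "composable (ks @ ginverse (comp_seq cmp hs) # hs)
    \<and> comp_seq cmp (ks @ ginverse (comp_seq cmp hs) # hs) = comp_seq cmp ks"
proof -
  let ?H = "comp_seq cmp hs" and ?K = "comp_seq cmp ks"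
  have H: "?H \<in> Mor" and K: "?K \<in> Mor" using ks hs by (simp_all add: comp_seq_in)
  have inv_hs: "composable (ginverse ?H # hs)"
    using hs H by (cases hs) (auto simp: ginverse_in src_ginverse tgt_comp_seq)
  have comp_inv_hs: "comp_seq cmp (ginverse ?H # hs) = idt (src ?H)"
    using hs H by (cases hs) (auto simp: ginverse_cmp)
  have "src (last ks) = tgt (hd (ginverse ?H # hs))"
    using H src_eq by (simp add: tgt_ginverse)
  from composable_append[OF ks inv_hs this] show ?thesis
    using comp_inv_hs src_eq cmp_idt_right[OF K] ks by (simp add: src_comp_seq)
qed

end

locale colored_category = small_category +
  fixes lam
  assumes colored: "morphism_colored Mor src tgt cmp lam"
begin

abbreviation "R1 \<equiv> rel1 Mor src tgt cmp lam"
abbreviation "S1 \<equiv> s1 Mor src tgt cmp lam"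

lemma color_factorization:
  "\<lbrakk>g \<in> Mor; f1 \<in> Mor; f2 \<in> Mor; src f1 = tgt f2; lam g = lam (cmp f1 f2)\<rbrakk> \<Longrightarrow>
    \<exists>g1\<in>Mor. \<exists>g2\<in>Mor. src g1 = tgt g2 \<and> g = cmp g1 g2 \<and> lam g1 = lam f1 \<and> lam g2 = lam f2"
  using colored unfolding morphism_colored_def by blast

lemma lift_color_seq:
  "\<lbrakk>composable fs; g \<in> Mor; lam g = lam (comp_seq cmp fs)\<rbrakk> \<Longrightarrow>
    \<exists>gs. composable gs \<and> map lam gs = map lam fs \<and> comp_seq cmp gs = g"
proof (induction fs arbitrary: g rule: composable.induct)
  case (2 f)
  then show ?case by (intro exI[of _ "[g]"]) auto
next
  case (3 f f' fs)
  let ?F = "comp_seq cmp (f' # fs)"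
  obtain g1 g2 where g: "g1 \<in> Mor" "g2 \<in> Mor" "src g1 = tgt g2" "g = cmp g1 g2"
      "lam g1 = lam f" "lam g2 = lam ?F"
    using color_factorization[of g f ?F] 3 by (auto simp: comp_seq_in tgt_comp_seq)
  have "composable (f' # fs)" using "3.prems" by simp
  then obtain gs where gs: "composable gs" "map lam gs = map lam (f' # fs)" "comp_seq cmp gs = g2"
    using "3.IH" g by blast
  then obtain g' gs' where gs_cons: "gs = g' # gs'" by (cases gs) auto
  have "tgt g2 = tgt g'" using tgt_comp_seq[OF gs(1)] gs(3) gs_cons by simp
  with g gs gs_cons have "composable (g1 # gs) \<and> map lam (g1 # gs) = map lam (f # f' # fs)
      \<and> comp_seq cmp (g1 # gs) = g"
    by auto
  then show ?case by blast
qed auto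

lemma rel1I:
  "\<lbrakk>composable fs; composable gs; map lam fs = map lam gs\<rbrakk> \<Longrightarrow>
    (lam (comp_seq cmp fs), lam (comp_seq cmp gs)) \<in> R1"
  unfolding rel1_def composable_seq_iff map_eq_map_iff_nth by blast

lemma rel1E:
  assumes "(a, b) \<in> R1"
  obtains fs gs where "composable fs" "composable gs" "map lam fs = map lam gs"
    "a = lam (comp_seq cmp fs)" "b = lam (comp_seq cmp gs)"
  using assms unfolding rel1_def composable_seq_iff map_eq_map_iff_nth by blast

lemma rel1_realize:
  assumes "(lam f, lam f') \<in> R1" "f \<in> Mor" "f' \<in> Mor"
  obtains fs fs' where "composable fs" "composable fs'" "map lam fs = map lam fs'"
    "comp_seq cmp fs = f" "comp_seq cmp fs' = f'"
proof -
  obtain gs gs' where gs: "composable gs" "composable gs'" "map lam gs = map lam gs'"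
    "lam f = lam (comp_seq cmp gs)" "lam f' = lam (comp_seq cmp gs')"
    using assms(1) by (rule rel1E)
  obtain fs where "composable fs" "map lam fs = map lam gs" "comp_seq cmp fs = f"
    using lift_color_seq[OF gs(1) assms(2) gs(4)] by blast
  moreover obtain fs' where "composable fs'" "map lam fs' = map lam gs'" "comp_seq cmp fs' = f'"
    using lift_color_seq[OF gs(2) assms(3) gs(5)] by blast
  ultimately show ?thesis using that gs(3) by simp
qed

lemma rel1_cmp:
  assumes "(lam f, lam f') \<in> R1" "(lam g, lam g') \<in> R1"
    and "f \<in> Mor" "f' \<in> Mor" "g \<in> Mor" "g' \<in> Mor" "src f = tgt g" "src f' = tgt g'"
  shows "(lam (cmp f g), lam (cmp f' g')) \<in> R1"
proof -
  obtain fs fs' where fs: "composable fs" "composable fs'" "map lam fs = map lam fs'"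
    "comp_seq cmp fs = f" "comp_seq cmp fs' = f'"
    using assms(1,3,4) by (rule rel1_realize)
  obtain gs gs' where gs: "composable gs" "composable gs'" "map lam gs = map lam gs'"
    "comp_seq cmp gs = g" "comp_seq cmp gs' = g'"
    using assms(2,5,6) by (rule rel1_realize)
  have "src (last fs) = tgt (hd gs)" "src (last fs') = tgt (hd gs')"
    using assms(7,8) fs gs by (simp_all add: src_comp_seq[symmetric] tgt_comp_seq[symmetric])
  then have "composable (fs @ gs) \<and> comp_seq cmp (fs @ gs) = cmp f g"
    and "composable (fs' @ gs') \<and> comp_seq cmp (fs' @ gs') = cmp f' g'"
    using composable_append fs gs by simp_all
  then show ?thesis
    using rel1I[of "fs @ gs" "fs' @ gs'"] fs(3) gs(3) by simp
qed

lemma rel1_subset: "R1 \<subseteq> I1 Mor lam \<times> I1 Mor lam"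
  by (auto elim!: rel1E simp: I1_def comp_seq_in)

lemma rel1_refl_on: "refl_on (I1 Mor lam) R1"
proof (rule refl_onI)
  fix a assume "a \<in> I1 Mor lam"
  then obtain f where "f \<in> Mor" "a = lam f" unfolding I1_def by auto
  then show "(a, a) \<in> R1" using rel1I[of "[f]" "[f]"] by simp
qed

lemma rel1_sym: "sym R1"
  by (rule symI) (metis rel1E rel1I)

end

locale colored_groupoid = small_groupoid + colored_category +
  assumes inverse_compat: "inverse_compatible Mor src tgt cmp idt lam"
begin

lemma lam_ginverse: "\<lbrakk>f \<in> Mor; g \<in> Mor; lam f = lam g\<rbrakk> \<Longrightarrow> lam (ginverse f) = lam (ginverse g)"
  using inverse_compat unfolding inverse_compatible_def by blast

text \<open>Factor \<open>q\<close> in the colors of \<open>p = f0\<^sup>-\<^sup>1 \<circ> (f0 \<circ> p)\<close> and invert the first factor.\<close>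

lemma exists_color_src_at_tgt:
  assumes p: "p \<in> Mor" and q: "q \<in> Mor" and f0: "f0 \<in> Mor"
    and pq: "lam p = lam q" and f0p: "src f0 = tgt p"
  shows "\<exists>f\<in>Mor. lam f = lam f0 \<and> src f = tgt q"
proof -
  let ?f0p = "cmp f0 p"
  have f0p_in: "?f0p \<in> Mor" using cmp_in f0 p f0p by blast
  have "cmp (ginverse f0) ?f0p = p"
    using f0 p f0p cmp_assoc[of "ginverse f0" f0 p, symmetric]
    by (simp add: ginverse_in src_ginverse ginverse_cmp cmp_idt_left)
  then obtain w1 w2 where w: "w1 \<in> Mor" "q = cmp w1 w2" "src w1 = tgt w2"
      "lam w1 = lam (ginverse f0)" "w2 \<in> Mor"
    using color_factorization[OF q ginverse_in[OF f0] f0p_in] pq f0 p f0p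
    by (auto simp: src_ginverse tgt_cmp)
  have "lam (ginverse w1) = lam f0"
    using lam_ginverse[OF w(1) ginverse_in[OF f0] w(4)] ginverse_ginverse[OF f0] by simp
  moreover have "src (ginverse w1) = tgt q"
    using w by (simp add: src_ginverse tgt_cmp)
  ultimately show ?thesis using ginverse_in[OF w(1)] by blast
qed

lemma exists_color_src_at_src:
  assumes "p \<in> Mor" "q \<in> Mor" "f0 \<in> Mor" "lam p = lam q" "src f0 = src p"
  shows "\<exists>f\<in>Mor. lam f = lam f0 \<and> src f = src q"
  using exists_color_src_at_tgt[OF ginverse_in ginverse_in _ lam_ginverse] assms
  by (simp add: tgt_ginverse)

lemma exists_color_tgt_at_tgt:
  assumes p: "p \<in> Mor" and q: "q \<in> Mor" and g0: "g0 \<in> Mor"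
    and pq: "lam p = lam q" and g0p: "tgt g0 = tgt p"
  shows "\<exists>g\<in>Mor. lam g = lam g0 \<and> tgt g = tgt q"
proof -
  obtain f where f: "f \<in> Mor" "lam f = lam (ginverse g0)" "src f = tgt q"
    using exists_color_src_at_tgt[OF p q ginverse_in[OF g0] pq] g0 g0p
    by (auto simp: src_ginverse)
  have "lam (ginverse f) = lam g0"
    using lam_ginverse[OF f(1) ginverse_in[OF g0] f(2)] ginverse_ginverse[OF g0] by simp
  then show ?thesis using f by (metis ginverse_in tgt_ginverse)
qed

text \<open>From witnesses \<open>(fs, gs)\<close> of \<open>a \<sim> b\<close> and \<open>(hs, ks)\<close> of \<open>b \<sim> c\<close>: lift \<open>hs\<close> and \<open>gs\<close>
  along morphisms \<open>P\<close>, \<open>H\<close> of color \<open>b\<close> ending at \<open>tgt (hd fs)\<close>, resp. starting at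
  \<open>src (last ks)\<close>, to \<open>ps\<close> and \<open>hs'\<close>. Then \<open>ps @ P\<^sup>-\<^sup>1 # fs\<close> and \<open>ks @ H\<^sup>-\<^sup>1 # hs'\<close> have
  the same colors and the composites of \<open>fs\<close> and \<open>ks\<close>.\<close>

lemma rel1_trans: "trans R1"
proof (rule transI)
  fix a b c assume "(a, b) \<in> R1" "(b, c) \<in> R1"
  then obtain fs gs hs ks where fg: "composable fs" "composable gs" "map lam fs = map lam gs"
      "a = lam (comp_seq cmp fs)" "b = lam (comp_seq cmp gs)"
    and hk: "composable hs" "composable ks" "map lam hs = map lam ks"
      "b = lam (comp_seq cmp hs)" "c = lam (comp_seq cmp ks)"
    by (metis rel1E)
  have hd_colors: "lam (hd gs) = lam (hd fs)" and last_colors: "lam (last hs) = lam (last ks)"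
    using map_eq_map_hd[OF fg(3)] map_eq_map_last[OF hk(3)] composable_not_Nil fg(1) hk(1)
    by auto
  obtain P where P: "P \<in> Mor" "lam P = b" "tgt P = tgt (hd fs)"
    using exists_color_tgt_at_tgt[OF composable_hd_in[OF fg(2)] composable_hd_in[OF fg(1)]
        comp_seq_in[OF fg(2)] hd_colors] fg(2,5) by (auto simp: tgt_comp_seq)
  obtain ps where ps: "composable ps" "map lam ps = map lam hs" "comp_seq cmp ps = P"
    using lift_color_seq[OF hk(1) P(1)] P(2) hk(4) by auto
  obtain H where H: "H \<in> Mor" "lam H = b" "src H = src (last ks)"
    using exists_color_src_at_src[OF composable_last_in[OF hk(1)] composable_last_in[OF hk(2)]
        comp_seq_in[OF hk(1)] last_colors] hk(1,4) by (auto simp: src_comp_seq)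
  obtain hs' where hs': "composable hs'" "map lam hs' = map lam gs" "comp_seq cmp hs' = H"
    using lift_color_seq[OF fg(2) H(1)] H(2) fg(5) by auto
  have left: "composable (ps @ ginverse P # fs)
      \<and> comp_seq cmp (ps @ ginverse P # fs) = comp_seq cmp fs"
    using comp_seq_cancel_left[OF ps(1) fg(1)] ps(3) P(3) by simp
  have right: "composable (ks @ ginverse H # hs')
      \<and> comp_seq cmp (ks @ ginverse H # hs') = comp_seq cmp ks"
    using comp_seq_cancel_right[OF hk(2) hs'(1)] hs'(3) H(3) by simp
  have "lam (ginverse P) = lam (ginverse H)" using lam_ginverse[OF P(1) H(1)] P H by simp
  then have "map lam (ps @ ginverse P # fs) = map lam (ks @ ginverse H # hs')"
    using ps(2) hs'(2) fg(3) hk(3) by simp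
  with rel1I left right show "(a, c) \<in> R1" using fg(4) hk(5) by metis
qed

lemma rel1_equiv: "equiv (I1 Mor lam) R1"
  using rel1_subset rel1_refl_on rel1_sym rel1_trans by (rule equivI)

lemma s1_eq_iff: "\<lbrakk>f \<in> Mor; g \<in> Mor\<rbrakk> \<Longrightarrow> S1 (lam f) = S1 (lam g) \<longleftrightarrow> (lam f, lam g) \<in> R1"
  using equiv_class_eq_iff[OF rel1_equiv] unfolding s1_def I1_def by blast

lemma rel1_idt_src:
  assumes "(lam f, lam g) \<in> R1" "f \<in> Mor" "g \<in> Mor"
  shows "(lam (idt (src f)), lam (idt (src g))) \<in> R1"
proof -
  obtain fs gs where fg: "composable fs" "composable gs" "map lam fs = map lam gs"
    "comp_seq cmp fs = f" "comp_seq cmp gs = g"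
    using assms by (rule rel1_realize)
  let ?l = "last fs" and ?l' = "last gs"
  have l: "?l \<in> Mor" "?l' \<in> Mor" "lam ?l = lam ?l'"
    using fg map_eq_map_last[OF fg(3) composable_not_Nil[OF fg(1)]]
    by (auto simp: composable_last_in)
  then have "map lam [ginverse ?l, ?l] = map lam [ginverse ?l', ?l']"
    using lam_ginverse[OF l] by simp
  moreover have "composable [ginverse ?l, ?l]" "composable [ginverse ?l', ?l']"
    using l by (simp_all add: ginverse_in src_ginverse)
  ultimately have "(lam (cmp (ginverse ?l) ?l), lam (cmp (ginverse ?l') ?l')) \<in> R1"
    using rel1I by fastforce
  then show ?thesis using l fg by (simp add: ginverse_cmp src_comp_seq[symmetric])
qed

lemma rel1_idt_tgt:
  assumes "(lam f, lam g) \<in> R1" "f \<in> Mor" "g \<in> Mor"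
  shows "(lam (idt (tgt f)), lam (idt (tgt g))) \<in> R1"
proof -
  obtain fs gs where fg: "composable fs" "composable gs" "map lam fs = map lam gs"
    "comp_seq cmp fs = f" "comp_seq cmp gs = g"
    using assms by (rule rel1_realize)
  let ?h = "hd fs" and ?h' = "hd gs"
  have h: "?h \<in> Mor" "?h' \<in> Mor" "lam ?h = lam ?h'"
    using fg map_eq_map_hd[OF fg(3) composable_not_Nil[OF fg(1)]]
    by (auto simp: composable_hd_in)
  then have "map lam [?h, ginverse ?h] = map lam [?h', ginverse ?h']"
    using lam_ginverse[OF h] by simp
  moreover have "composable [?h, ginverse ?h]" "composable [?h', ginverse ?h']"
    using h by (simp_all add: ginverse_in tgt_ginverse)
  ultimately have "(lam (cmp ?h (ginverse ?h)), lam (cmp ?h' (ginverse ?h'))) \<in> R1"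
    using rel1I by fastforce
  then show ?thesis using h fg by (simp add: cmp_ginverse tgt_comp_seq[symmetric])
qed

lemma s1_idt_src_cong:
  "\<lbrakk>f \<in> Mor; g \<in> Mor; S1 (lam f) = S1 (lam g)\<rbrakk> \<Longrightarrow>
    S1 (lam (idt (src f))) = S1 (lam (idt (src g)))"
  by (simp add: s1_eq_iff rel1_idt_src idt_in src_in)

lemma s1_idt_tgt_cong:
  "\<lbrakk>f \<in> Mor; g \<in> Mor; S1 (lam f) = S1 (lam g)\<rbrakk> \<Longrightarrow>
    S1 (lam (idt (tgt f))) = S1 (lam (idt (tgt g)))"
  by (simp add: s1_eq_iff rel1_idt_tgt idt_in tgt_in)

abbreviation "R0 \<equiv> rel0 Mor src tgt cmp idt lam"
abbreviation "S0 \<equiv> s0 Mor src tgt cmp idt lam"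
abbreviation "L0 \<equiv> lam0 idt lam"

lemma rel0_eq: "R0 = {(a, b). a \<in> I0 Obj idt lam \<and> b \<in> I0 Obj idt lam \<and> S1 a = S1 b}"
proof (intro equalityI subsetI)
  fix x assume "x \<in> R0"
  then obtain f g where fg: "x = (L0 (src f), L0 (src g))" "f \<in> Mor" "g \<in> Mor"
      "S1 (lam f) = S1 (lam g)"
    unfolding rel0_def by blast
  moreover have "S1 (lam (idt (src f))) = S1 (lam (idt (src g)))"
    using s1_idt_src_cong[OF fg(2-4)] .
  ultimately show "x \<in> {(a, b). a \<in> I0 Obj idt lam \<and> b \<in> I0 Obj idt lam \<and> S1 a = S1 b}"
    using src_in unfolding I0_def lam0_def by auto
next
  fix x assume "x \<in> {(a, b). a \<in> I0 Obj idt lam \<and> b \<in> I0 Obj idt lam \<and> S1 a = S1 b}"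
  then obtain u v where "x = (L0 (src (idt u)), L0 (src (idt v)))" "u \<in> Obj" "v \<in> Obj"
      "S1 (lam (idt u)) = S1 (lam (idt v))"
    unfolding I0_def lam0_def by (auto simp: src_idt)
  then show "x \<in> R0" unfolding rel0_def using idt_in by blast
qed

lemma rel0_equiv: "equiv (I0 Obj idt lam) R0"
  unfolding rel0_eq by (rule equivI) (auto intro!: refl_onI symI transI)

lemma s0_eq_iff:
  assumes "x \<in> Obj" "y \<in> Obj"
  shows "S0 (L0 x) = S0 (L0 y) \<longleftrightarrow> S1 (lam (idt x)) = S1 (lam (idt y))"
proof -
  have xy: "L0 x \<in> I0 Obj idt lam" "L0 y \<in> I0 Obj idt lam" using assms unfolding I0_def by auto
  then have "S0 (L0 x) = S0 (L0 y) \<longleftrightarrow> (L0 x, L0 y) \<in> R0"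
    using equiv_class_eq_iff[OF rel0_equiv] unfolding s0_def by blast
  also have "\<dots> \<longleftrightarrow> S1 (lam (idt x)) = S1 (lam (idt y))"
    using xy unfolding rel0_eq lam0_def by auto
  finally show ?thesis .
qed

lemma exists_color_src_at:
  assumes f0: "f0 \<in> Mor" and g: "g \<in> Mor"
    and e: "S1 (lam (idt (src f0))) = S1 (lam (idt (tgt g)))"
  shows "\<exists>f\<in>Mor. lam f = lam f0 \<and> src f = tgt g"
proof -
  have x: "idt (src f0) \<in> Mor" and y: "idt (tgt g) \<in> Mor"
    using f0 g by (simp_all add: idt_in src_in tgt_in)
  then obtain ps qs where pq: "composable ps" "composable qs" "map lam ps = map lam qs"
      "comp_seq cmp ps = idt (src f0)" "comp_seq cmp qs = idt (tgt g)"
    using e s1_eq_iff rel1_realize by metis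
  have "lam (hd ps) = lam (hd qs)"
    using map_eq_map_hd[OF pq(3) composable_not_Nil[OF pq(1)]] .
  moreover have "src f0 = tgt (hd ps)" and "tgt (hd qs) = tgt g"
    using tgt_comp_seq pq f0 g by (metis src_in tgt_in tgt_idt)+
  ultimately show ?thesis
    using exists_color_src_at_tgt[OF composable_hd_in[OF pq(1)] composable_hd_in[OF pq(2)] f0]
    by simp
qed

lemma s1_cmp_cong:
  assumes "f \<in> Mor" "f' \<in> Mor" "g \<in> Mor" "g' \<in> Mor" "src f = tgt g" "src f' = tgt g'"
    and "S1 (lam f) = S1 (lam f')" "S1 (lam g) = S1 (lam g')"
  shows "S1 (lam (cmp f g)) = S1 (lam (cmp f' g'))"
  using assms rel1_cmp by (simp add: s1_eq_iff cmp_in)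

abbreviation "UObj \<equiv> Ibar0 Obj Mor src tgt cmp idt lam"
abbreviation "UMor \<equiv> Ibar1 Mor src tgt cmp lam"

lemma Ibar1E:
  assumes "A \<in> UMor"
  obtains f where "f \<in> Mor" "A = S1 (lam f)"
  using assms unfolding Ibar1_def quotient_def I1_def s1_def by auto

lemma Ibar1I: "f \<in> Mor \<Longrightarrow> S1 (lam f) \<in> UMor"
  unfolding Ibar1_def I1_def s1_def by (rule quotientI) auto

lemma Ibar0E:
  assumes "X \<in> UObj"
  obtains x where "x \<in> Obj" "X = S0 (L0 x)"
  using assms unfolding Ibar0_def quotient_def I0_def s0_def by auto

lemma Ibar0I: "x \<in> Obj \<Longrightarrow> S0 (L0 x) \<in> UObj"
  unfolding Ibar0_def I0_def s0_def by (rule quotientI) auto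

text \<open>The structure maps of \<open>\<U>(\<G>, \<lambda>)\<close>, read off from chosen representatives; the lemmas
  \<open>*_s1\<close>, \<open>*_s0\<close> below show that the choice does not matter.\<close>

definition qrep where "qrep A = (SOME f. f \<in> Mor \<and> A = S1 (lam f))"
definition qsrc where "qsrc A = S0 (L0 (src (qrep A)))"
definition qtgt where "qtgt A = S0 (L0 (tgt (qrep A)))"
definition qfactors where "qfactors A B = (SOME p. fst p \<in> Mor \<and> snd p \<in> Mor \<and>
  src (fst p) = tgt (snd p) \<and> A = S1 (lam (fst p)) \<and> B = S1 (lam (snd p)))"
definition qcmp where "qcmp A B = S1 (lam (cmp (fst (qfactors A B)) (snd (qfactors A B))))"
definition qidt where "qidt X = S1 (lam (idt (SOME x. x \<in> Obj \<and> X = S0 (L0 x))))"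

lemma qrep_s1: "f \<in> Mor \<Longrightarrow> qrep (S1 (lam f)) \<in> Mor \<and> S1 (lam (qrep (S1 (lam f)))) = S1 (lam f)"
  unfolding qrep_def by (rule someI2[of _ f]) auto

lemma qsrc_s1: "f \<in> Mor \<Longrightarrow> qsrc (S1 (lam f)) = S0 (L0 (src f))"
  unfolding qsrc_def using qrep_s1 s1_idt_src_cong s0_eq_iff src_in by metis

lemma qtgt_s1: "f \<in> Mor \<Longrightarrow> qtgt (S1 (lam f)) = S0 (L0 (tgt f))"
  unfolding qtgt_def using qrep_s1 s1_idt_tgt_cong s0_eq_iff tgt_in by metis

lemma qcmp_s1:
  assumes "f \<in> Mor" "g \<in> Mor" "src f = tgt g"
  shows "qcmp (S1 (lam f)) (S1 (lam g)) = S1 (lam (cmp f g))"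
proof -
  let ?P = "\<lambda>p. fst p \<in> Mor \<and> snd p \<in> Mor \<and> src (fst p) = tgt (snd p)
    \<and> S1 (lam f) = S1 (lam (fst p)) \<and> S1 (lam g) = S1 (lam (snd p))"
  have "?P (qfactors (S1 (lam f)) (S1 (lam g)))"
    unfolding qfactors_def by (rule someI[of _ "(f, g)"]) (use assms in simp)
  then show ?thesis unfolding qcmp_def using s1_cmp_cong assms by metis
qed

lemma qidt_s0: "x \<in> Obj \<Longrightarrow> qidt (S0 (L0 x)) = S1 (lam (idt x))"
  unfolding qidt_def by (rule someI2[of _ x]) (auto simp: s0_eq_iff)

lemma qcomposable_rep:
  assumes A: "A \<in> UMor" and g: "g \<in> Mor" and AB: "qsrc A = qtgt (S1 (lam g))"
  shows "\<exists>f\<in>Mor. A = S1 (lam f) \<and> src f = tgt g"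
proof -
  obtain f0 where f0: "f0 \<in> Mor" "A = S1 (lam f0)" using A by (rule Ibar1E)
  then have "S1 (lam (idt (src f0))) = S1 (lam (idt (tgt g)))"
    using AB g by (simp add: qsrc_s1 qtgt_s1 s0_eq_iff src_in tgt_in)
  then obtain f where "f \<in> Mor" "lam f = lam f0" "src f = tgt g"
    using exists_color_src_at f0 g by blast
  then show ?thesis using f0 by metis
qed

lemma qcmp_assoc:
  assumes "A \<in> UMor" "B \<in> UMor" "C \<in> UMor" "qsrc A = qtgt B" "qsrc B = qtgt C"
  shows "qcmp (qcmp A B) C = qcmp A (qcmp B C)"
proof -
  obtain h where h: "h \<in> Mor" "C = S1 (lam h)" using assms(3) by (rule Ibar1E)
  obtain g where g: "g \<in> Mor" "B = S1 (lam g)" "src g = tgt h"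
    using qcomposable_rep[OF assms(2) h(1)] assms(5) h(2) by blast
  obtain f where f: "f \<in> Mor" "A = S1 (lam f)" "src f = tgt g"
    using qcomposable_rep[OF assms(1) g(1)] assms(4) g(2) by blast
  show ?thesis
    using f g h by (simp add: qcmp_s1 cmp_in src_cmp tgt_cmp cmp_assoc)
qed

lemma quotient_category: "is_category UObj UMor qsrc qtgt qcmp qidt"
  unfolding is_category_def
proof (intro conjI ballI impI)
  fix A assume "A \<in> UMor"
  then obtain f where f: "f \<in> Mor" "A = S1 (lam f)" by (rule Ibar1E)
  then show "qsrc A \<in> UObj" "qtgt A \<in> UObj"
    by (simp_all add: qsrc_s1 qtgt_s1 Ibar0I src_in tgt_in)
  show "qcmp (qidt (qtgt A)) A = A" "qcmp A (qidt (qsrc A)) = A"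
    using f by (simp_all add: qsrc_s1 qtgt_s1 qidt_s0 qcmp_s1 src_in tgt_in idt_in src_idt
        tgt_idt cmp_idt_left cmp_idt_right)
next
  fix X assume "X \<in> UObj"
  then obtain x where "x \<in> Obj" "X = S0 (L0 x)" by (rule Ibar0E)
  then show "qidt X \<in> UMor" "qsrc (qidt X) = X" "qtgt (qidt X) = X"
    by (simp_all add: qidt_s0 Ibar1I qsrc_s1 qtgt_s1 idt_in src_idt tgt_idt)
next
  fix A B assume A: "A \<in> UMor" and B: "B \<in> UMor" and AB: "qsrc A = qtgt B"
  obtain g where g: "g \<in> Mor" "B = S1 (lam g)" using B by (rule Ibar1E)
  obtain f where f: "f \<in> Mor" "A = S1 (lam f)" "src f = tgt g"
    using qcomposable_rep[OF A g(1)] AB g(2) by blast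
  show "qcmp A B \<in> UMor" "qsrc (qcmp A B) = qsrc B" "qtgt (qcmp A B) = qtgt A"
    using f g by (simp_all add: qcmp_s1 Ibar1I qsrc_s1 qtgt_s1 cmp_in src_cmp tgt_cmp)
next
  fix A B C assume "A \<in> UMor" "B \<in> UMor" "C \<in> UMor" "qsrc A = qtgt B" "qsrc B = qtgt C"
  then show "qcmp (qcmp A B) C = qcmp A (qcmp B C)" by (rule qcmp_assoc)
qed

theorem quotient_groupoid: "is_groupoid UObj UMor qsrc qtgt qcmp qidt"
  unfolding is_groupoid_def
proof (intro conjI quotient_category ballI)
  fix A assume "A \<in> UMor"
  then obtain f where f: "f \<in> Mor" "A = S1 (lam f)" by (rule Ibar1E)
  let ?B = "S1 (lam (ginverse f))"
  have "?B \<in> UMor \<and> qsrc ?B = qtgt A \<and> qtgt ?B = qsrc A \<and>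
      qcmp ?B A = qidt (qsrc A) \<and> qcmp A ?B = qidt (qtgt A)"
    using f by (simp add: Ibar1I qsrc_s1 qtgt_s1 qcmp_s1 qidt_s0 ginverse_in src_ginverse
        tgt_ginverse ginverse_cmp cmp_ginverse src_in tgt_in)
  then show "\<exists>B\<in>UMor. qsrc B = qtgt A \<and> qtgt B = qsrc A \<and>
      qcmp B A = qidt (qsrc A) \<and> qcmp A B = qidt (qtgt A)" by blast
qed

end

theorem mainTheorem1:
  fixes Obj :: "'o set" and Mor :: "'m set"
    and src tgt :: "'m \<Rightarrow> 'o" and cmp :: "'m \<Rightarrow> 'm \<Rightarrow> 'm" and idt :: "'o \<Rightarrow> 'm"
    and lam :: "'m \<Rightarrow> 'i"
  assumes grpd: "is_groupoid Obj Mor src tgt cmp idt"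
    and colored: "morphism_colored Mor src tgt cmp lam"
    and invc: "inverse_compatible Mor src tgt cmp idt lam"
  defines "S1 \<equiv> s1 Mor src tgt cmp lam"
    and "S0 \<equiv> s0 Mor src tgt cmp idt lam"
    and "L0 \<equiv> lam0 idt lam"
  shows "equiv (I1 Mor lam) (rel1 Mor src tgt cmp lam)
       \<and> equiv (I0 Obj idt lam) (rel0 Mor src tgt cmp idt lam)
       \<and> (\<exists>usrc utgt ucomp uidt.
            is_groupoid (Ibar0 Obj Mor src tgt cmp idt lam) (Ibar1 Mor src tgt cmp lam)
                        usrc utgt ucomp uidt
          \<and> (\<forall>f\<in>Mor. usrc (S1 (lam f)) = S0 (L0 (src f))
                     \<and> utgt (S1 (lam f)) = S0 (L0 (tgt f)))
          \<and> (\<forall>f\<in>Mor. \<forall>g\<in>Mor. src f = tgt g \<longrightarrow>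
                ucomp (S1 (lam f)) (S1 (lam g)) = S1 (lam (cmp f g)))
          \<and> (\<forall>a\<in>Ibar1 Mor src tgt cmp lam. \<forall>b\<in>Ibar1 Mor src tgt cmp lam.
                usrc a = utgt b \<longrightarrow>
                (\<exists>f\<in>Mor. \<exists>g\<in>Mor. src f = tgt g \<and> a = S1 (lam f) \<and> b = S1 (lam g))))"
proof -
  interpret U: colored_groupoid Obj Mor src tgt cmp idt lam
    using grpd colored invc by unfold_locales (auto simp: is_groupoid_def)
  have "\<forall>a\<in>U.UMor. \<forall>b\<in>U.UMor. U.qsrc a = U.qtgt b \<longrightarrow>
      (\<exists>f\<in>Mor. \<exists>g\<in>Mor. src f = tgt g \<and> a = S1 (lam f) \<and> b = S1 (lam g))"
    unfolding S1_def by (metis U.Ibar1E U.qcomposable_rep)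
  then show ?thesis
    unfolding S1_def S0_def L0_def
    using U.rel1_equiv U.rel0_equiv U.quotient_groupoid U.qsrc_s1 U.qtgt_s1 U.qcmp_s1
    by (intro conjI exI[of _ U.qsrc] exI[of _ U.qtgt] exI[of _ U.qcmp] exI[of _ U.qidt]) simp_all
qed

end
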